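(* For every $m\in\mathbb{Z}$: (i) $s_2s_1^ms_2\in U$; (ii) $s_2^{-1}s_1^ms_2^{-1}\in U'$; (iii) $s_2^{-2}s_1^ms_2^{-1}\in U'$.
   Context: Let $B_3=\langle s_1,s_2\mid s_1s_2s_1=s_2s_1s_2\rangle$, $R_4=\mathbb{Z}[a,b,c,d,d^{-1}]$, and let $H_4$ be the quotient of the group algebra $R_4B_3$ by the relations $s_i^4=as_i^3+bs_i^2+cs_i+d$ for $i=1,2$; identify $s_i$ with their images in $H_4$. For $i=1,2$ let $u_i$ be the $R_4$-subalgebra of $H_4$ generated by $s_i$. For $R_4$-submodules (or elements) $X_1,\dots,X_n$ of $H_4$, $X_1\cdots X_n$ denotes the $R_4$-submodule spanned by all products $x_1\cdots x_n$ with $x_j\in X_j$, and sums are sums of submodules. Define $U'=u_1u_2u_1+u_1s_2s_1^{-1}s_2u_1+u_1s_2^{-1}s_1s_2^{-1}u_1+u_1s_2^{-1}s_1^{-2}s_2^{-1}$ and $U=U'+u_1s_2s_1^{-2}s_2u_1+u_1s_2^{-2}s_1^{-2}s_2^{-2}u_1$. *)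

theory Defs
  imports Main
begin

text \<open>H_4 is realised through its universal property: an arbitrary ring A containing
central elements a,b,c,d with d invertible (so that R_4 maps onto the subring they
generate) and invertible s1,s2 satisfying the braid and quartic relations.
The subring generated by a,b,c,d,d^{-1} is the image of R_4.\<close>

inductive_set coeff_ring :: "'a::ring_1 \<Rightarrow> 'a \<Rightarrow> 'a \<Rightarrow> 'a \<Rightarrow> 'a \<Rightarrow> 'a set"
  for a b c d d' :: "'a::ring_1" where
  one: "1 \<in> coeff_ring a b c d d'"
| gen_a: "a \<in> coeff_ring a b c d d'"
| gen_b: "b \<in> coeff_ring a b c d d'"
| gen_c: "c \<in> coeff_ring a b c d d'"
| gen_d: "d \<in> coeff_ring a b c d d'"
| gen_dinv: "d' \<in> coeff_ring a b c d d'"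
| neg: "x \<in> coeff_ring a b c d d' \<Longrightarrow> - x \<in> coeff_ring a b c d d'"
| add: "x \<in> coeff_ring a b c d d' \<Longrightarrow> y \<in> coeff_ring a b c d d' \<Longrightarrow> x + y \<in> coeff_ring a b c d d'"
| mult: "x \<in> coeff_ring a b c d d' \<Longrightarrow> y \<in> coeff_ring a b c d d' \<Longrightarrow> x * y \<in> coeff_ring a b c d d'"

inductive_set rspan :: "'a::ring_1 set \<Rightarrow> 'a set \<Rightarrow> 'a set"
  for R S :: "'a::ring_1 set" where
  zero: "0 \<in> rspan R S"
| smul: "r \<in> R \<Longrightarrow> x \<in> S \<Longrightarrow> r * x \<in> rspan R S"
| add: "x \<in> rspan R S \<Longrightarrow> y \<in> rspan R S \<Longrightarrow> x + y \<in> rspan R S"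

definition mprod :: "'a::ring_1 set \<Rightarrow> 'a set list \<Rightarrow> 'a set" where
  "mprod R Xs = rspan R {foldr (*) xs 1 | xs. list_all2 (\<lambda>x X. x \<in> X) xs Xs}"

definition msum :: "'a::ring_1 set \<Rightarrow> 'a set \<Rightarrow> 'a set" where
  "msum X Y = {x + y | x y. x \<in> X \<and> y \<in> Y}"

definition zpow :: "'a::ring_1 \<Rightarrow> 'a \<Rightarrow> int \<Rightarrow> 'a" where
  "zpow s s' m = (if 0 \<le> m then s ^ nat m else s' ^ nat (- m))"

definition subalg :: "'a::ring_1 set \<Rightarrow> 'a \<Rightarrow> 'a set" where
  "subalg R s = rspan R {s ^ n | n. True}"

definition Uprime :: "'a::ring_1 set \<Rightarrow> 'a \<Rightarrow> 'a \<Rightarrow> 'a \<Rightarrow> 'a \<Rightarrow> 'a set" where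
  "Uprime R s1 s2 s1' s2' =
     (let u1 = subalg R s1; u2 = subalg R s2 in
      msum (msum (msum (mprod R [u1, u2, u1])
                       (mprod R [u1, {s2 * s1' * s2}, u1]))
                 (mprod R [u1, {s2' * s1 * s2'}, u1]))
           (mprod R [u1, {s2' * s1' ^ 2 * s2'}]))"

definition Ufull :: "'a::ring_1 set \<Rightarrow> 'a \<Rightarrow> 'a \<Rightarrow> 'a \<Rightarrow> 'a \<Rightarrow> 'a set" where
  "Ufull R s1 s2 s1' s2' =
     (let u1 = subalg R s1 in
      msum (msum (Uprime R s1 s2 s1' s2')
                 (mprod R [u1, {s2 * s1' ^ 2 * s2}, u1]))
           (mprod R [u1, {s2' ^ 2 * s1' ^ 2 * s2' ^ 2}, u1]))"

end

theory Submission
  imports Defs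
begin

text \<open>The quartic relation makes the integer powers of a generator satisfy a fourth-order
  linear recurrence with unit constant term d, so an R-submodule containing four consecutive
  powers (multiplied on both sides by fixed elements) contains all of them. Each claim is thereby
  reduced to four explicit words, which the braid relation, in the forms
  s2 s1 s2^-1 = s1^-1 s2 s1 and s2 s1^-1 s2^-1 = s1^-1 s2^-1 s1, turns into generators of U or U'.
  For (iii) the same argument runs over the powers of s2 to the left of s1^m s2^-1, starting
  from (ii) and from the case s2^2 s1^m s2^-1.\<close>

definition rsubmodule :: "'a::ring_1 set \<Rightarrow> 'a set \<Rightarrow> bool" where
  "rsubmodule R M \<longleftrightarrow> 0 \<in> M \<and> (\<forall>x\<in>M. \<forall>y\<in>M. x + y \<in> M) \<and> (\<forall>r\<in>R. \<forall>x\<in>M. r * x \<in> M)"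

lemma rsubmodule_zero: "rsubmodule R M \<Longrightarrow> 0 \<in> M"
  unfolding rsubmodule_def by blast

lemma rsubmodule_add: "rsubmodule R M \<Longrightarrow> x \<in> M \<Longrightarrow> y \<in> M \<Longrightarrow> x + y \<in> M"
  unfolding rsubmodule_def by blast

lemma rsubmodule_smult: "rsubmodule R M \<Longrightarrow> r \<in> R \<Longrightarrow> x \<in> M \<Longrightarrow> r * x \<in> M"
  unfolding rsubmodule_def by blast

lemma rsubmodule_rspan:
  assumes "\<And>r r'. r \<in> R \<Longrightarrow> r' \<in> R \<Longrightarrow> r * r' \<in> R"
  shows "rsubmodule R (rspan R S)"
  unfolding rsubmodule_def
proof (intro conjI ballI)
  fix r x assume "r \<in> R" and "x \<in> rspan R S"
  from this(2) show "r * x \<in> rspan R S"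
  proof induction
    case (smul r' y)
    then show ?case using assms \<open>r \<in> R\<close> by (metis mult.assoc rspan.smul)
  qed (simp_all add: distrib_left rspan.intros)
qed (simp_all add: rspan.intros)

lemma rspan_base: "1 \<in> R \<Longrightarrow> x \<in> S \<Longrightarrow> x \<in> rspan R S"
  using rspan.smul[of 1 R x S] by simp

lemma rsubmodule_mprod:
  "(\<And>r r'. r \<in> R \<Longrightarrow> r' \<in> R \<Longrightarrow> r * r' \<in> R) \<Longrightarrow> rsubmodule R (mprod R Xs)"
  unfolding mprod_def by (rule rsubmodule_rspan)

lemma mprod_mem3: "1 \<in> R \<Longrightarrow> x \<in> X \<Longrightarrow> y \<in> Y \<Longrightarrow> z \<in> Z \<Longrightarrow> x * y * z \<in> mprod R [X, Y, Z]"
  unfolding mprod_def by (rule rspan_base) (auto intro!: exI[of _ "[x, y, z]"] simp: mult.assoc)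

lemma mprod_mem2: "1 \<in> R \<Longrightarrow> x \<in> X \<Longrightarrow> y \<in> Y \<Longrightarrow> x * y \<in> mprod R [X, Y]"
  unfolding mprod_def by (rule rspan_base) (auto intro!: exI[of _ "[x, y]"])

lemma mprod_zero: "0 \<in> mprod R Xs"
  unfolding mprod_def by (rule rspan.zero)

lemma rsubmodule_msum:
  assumes X: "rsubmodule R X" and Y: "rsubmodule R Y"
  shows "rsubmodule R (msum X Y)"
  unfolding rsubmodule_def msum_def
proof (intro conjI ballI; clarify?)
  show "\<exists>x y. 0 = x + y \<and> x \<in> X \<and> y \<in> Y"
    using rsubmodule_zero[OF X] rsubmodule_zero[OF Y] by force
next
  fix x y x' y' assume "x \<in> X" "y \<in> Y" "x' \<in> X" "y' \<in> Y"
  then show "\<exists>u v. x + y + (x' + y') = u + v \<and> u \<in> X \<and> v \<in> Y"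
    using rsubmodule_add[OF X] rsubmodule_add[OF Y]
    by (intro exI[of _ "x + x'"] exI[of _ "y + y'"]) (simp add: algebra_simps)
next
  fix r x y assume "r \<in> R" "x \<in> X" "y \<in> Y"
  then show "\<exists>u v. r * (x + y) = u + v \<and> u \<in> X \<and> v \<in> Y"
    using rsubmodule_smult[OF X] rsubmodule_smult[OF Y]
    by (intro exI[of _ "r * x"] exI[of _ "r * y"]) (simp add: distrib_left)
qed

lemma msum_memI1: "x \<in> X \<Longrightarrow> 0 \<in> Y \<Longrightarrow> x \<in> msum X Y"
  unfolding msum_def by force

lemma msum_memI2: "0 \<in> X \<Longrightarrow> y \<in> Y \<Longrightarrow> y \<in> msum X Y"
  unfolding msum_def by force

lemma rsubmodule_sandwich:
  assumes M: "rsubmodule R M" and central: "\<And>r x. r \<in> R \<Longrightarrow> r * x = x * r"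
  shows "rsubmodule R {x. p * x * q \<in> M}"
  unfolding rsubmodule_def
proof (intro conjI ballI; simp)
  show "0 \<in> M" by (rule rsubmodule_zero[OF M])
  show "p * x * q \<in> M \<Longrightarrow> p * y * q \<in> M \<Longrightarrow> p * (x + y) * q \<in> M" for x y
    using rsubmodule_add[OF M] by (simp add: distrib_left distrib_right)
  show "r \<in> R \<Longrightarrow> p * x * q \<in> M \<Longrightarrow> p * (r * x) * q \<in> M" for r x
    using rsubmodule_smult[OF M] central[of r p] by (metis mult.assoc)
qed

lemma inverse_central:
  fixes d d' :: "'a::monoid_mult"
  assumes central: "\<And>x. d * x = x * d" and inv: "d * d' = 1" "d' * d = 1"
  shows "d' * x = x * d'"
proof -
  have "d' * x = d' * (x * d) * d'" by (simp add: mult.assoc inv)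
  also have "\<dots> = (d' * d) * x * d'" by (simp add: central mult.assoc)
  finally show ?thesis by (simp add: inv)
qed

lemma coeff_ring_central:
  assumes central: "\<And>x. a * x = x * a" "\<And>x. b * x = x * b"
                   "\<And>x. c * x = x * c" "\<And>x. d * x = x * d"
    and inv: "d * d' = 1" "d' * d = 1"
    and "r \<in> coeff_ring a b c d d'"
  shows "r * x = x * r"
  using assms(7)
proof (induction arbitrary: x)
  case (mult r r')
  then show ?case by (metis mult.assoc)
qed (simp_all add: central inverse_central[OF central(4) inv] distrib_left distrib_right)

text \<open>Since d is a unit, the recurrence can also be run backwards.\<close>
lemma recurrence4_closed:
  fixes f :: "int \<Rightarrow> 'a::ring_1"
  assumes M: "rsubmodule R M"
    and coeffs: "a \<in> R" "b \<in> R" "c \<in> R" "d \<in> R" "d' \<in> R" "- a \<in> R" "- b \<in> R" "- c \<in> R"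
    and inv: "d' * d = 1"
    and rec: "\<And>j. f (j + 4) = a * f (j + 3) + b * f (j + 2) + c * f (j + 1) + d * f j"
    and init: "f t \<in> M" "f (t + 1) \<in> M" "f (t + 2) \<in> M" "f (t + 3) \<in> M"
  shows "f m \<in> M"
proof -
  note closed = rsubmodule_add[OF M] rsubmodule_smult[OF M]
  have backward: "f (j - 1) = d' * (f (j + 3) + (- a) * f (j + 2) + (- b) * f (j + 1) + (- c) * f j)" for j
  proof -
    have "f (j - 1) = d' * (d * f (j - 1))" by (simp add: mult.assoc[symmetric] inv)
    also have "d * f (j - 1) = f (j + 3) + (- a) * f (j + 2) + (- b) * f (j + 1) + (- c) * f j"
      using rec[of "j - 1"] by (simp add: algebra_simps)
    finally show ?thesis .
  qed
  have "f i \<in> M \<and> f (i + 1) \<in> M \<and> f (i + 2) \<in> M \<and> f (i + 3) \<in> M" for i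
  proof (induction i rule: int_induct[where k = t])
    case base
    show ?case using init by simp
  next
    case (step1 i)
    then have "f (i + 4) \<in> M" unfolding rec using coeffs by (intro closed) auto
    with step1 show ?case by (simp add: add.assoc)
  next
    case (step2 i)
    then have "f (i - 1) \<in> M" unfolding backward using coeffs by (intro closed) auto
    with step2 show ?case by (simp add: add.commute)
  qed
  then show ?thesis by simp
qed

lemma zpow_succ:
  assumes "s' * s = 1"
  shows "zpow s s' (i + 1) = zpow s s' i * s"
proof (cases "0 \<le> i")
  case True
  then have "nat (i + 1) = Suc (nat i)" by simp
  with True show ?thesis by (simp add: zpow_def power_Suc2 power_commutes)
next
  case False
  then have "nat (- i) = Suc (nat (- (i + 1)))" by simp
  then have "s' ^ nat (- i) * s = s' ^ nat (- (i + 1))"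
    by (simp only: power_Suc2 mult.assoc assms mult_1_right)
  with False show ?thesis by (auto simp: zpow_def)
qed

lemma zpow_add_nat:
  assumes "s' * s = 1"
  shows "zpow s s' (i + int n) = zpow s s' i * s ^ n"
proof (induction n)
  case 0
  show ?case by simp
next
  case (Suc n)
  have "zpow s s' (i + int (Suc n)) = zpow s s' (i + int n + 1)" by (simp add: ac_simps)
  also have "\<dots> = zpow s s' i * s ^ Suc n"
    by (simp only: zpow_succ[OF assms] Suc.IH power_Suc2 mult.assoc)
  finally show ?case .
qed

lemma zpow_quartic_recurrence:
  assumes inv: "s' * s = 1"
    and central: "\<And>x. a * x = x * a" "\<And>x. b * x = x * b"
                 "\<And>x. c * x = x * c" "\<And>x. d * x = x * d"
    and quart: "s ^ 4 = a * s ^ 3 + b * s ^ 2 + c * s + d"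
  shows "zpow s s' (j + 4) = a * zpow s s' (j + 3) + b * zpow s s' (j + 2)
                              + c * zpow s s' (j + 1) + d * zpow s s' j"
proof -
  note pow = zpow_add_nat[OF inv, of j]
  have commute: "zpow s s' j * (r * y) = r * (zpow s s' j * y)" if "\<And>x. r * x = x * r" for r y
    by (metis that mult.assoc)
  have "zpow s s' (j + 4) = zpow s s' j * s ^ 4" using pow[of 4] by simp
  also have "\<dots> = a * (zpow s s' j * s ^ 3) + b * (zpow s s' j * s ^ 2)
                   + c * (zpow s s' j * s) + d * zpow s s' j"
    unfolding quart
    by (simp add: distrib_left commute[OF central(1)] commute[OF central(2)]
        commute[OF central(3)] central(4)[of "zpow s s' j", symmetric])
  also have "\<dots> = a * zpow s s' (j + 3) + b * zpow s s' (j + 2)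
                   + c * zpow s s' (j + 1) + d * zpow s s' j"
    using pow[of 3] pow[of 2] pow[of 1] by simp
  finally show ?thesis .
qed

lemma power_conj:
  fixes u u' s :: "'a::monoid_mult"
  assumes "u * u' = 1" "u' * u = 1"
  shows "(u * s * u') ^ n = u * s ^ n * u'"
proof (induction n)
  case 0
  show ?case by (simp add: assms(1))
next
  case (Suc n)
  have "(u * s * u') ^ Suc n = u * s ^ n * (u' * u) * s * u'"
    unfolding power_Suc2 Suc.IH by (simp only: mult.assoc)
  also have "\<dots> = u * s ^ Suc n * u'"
    by (simp only: assms(2) power_Suc2 mult.assoc mult_1_left)
  finally show ?case .
qed

lemma zpow_conj:
  assumes "u * u' = 1" "u' * u = 1"
  shows "u * zpow s s' m * u' = zpow (u * s * u') (u * s' * u') m"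
  using power_conj[OF assms] by (simp add: zpow_def)

locale quartic_unit =
  fixes a b c d d' s s' :: "'a::ring_1"
  assumes central: "\<And>x. a * x = x * a" "\<And>x. b * x = x * b"
                   "\<And>x. c * x = x * c" "\<And>x. d * x = x * d"
    and dinv: "d * d' = 1" "d' * d = 1"
    and sinv: "s * s' = 1" "s' * s = 1"
    and quart: "s ^ 4 = a * s ^ 3 + b * s ^ 2 + c * s + d"
begin

lemma coeff_commute: "r \<in> coeff_ring a b c d d' \<Longrightarrow> r * x = x * r"
  using coeff_ring_central[OF central dinv] .

lemma sinv_cancel: "s' * (s * x) = x" "s * (s' * x) = x"
  by (simp_all add: mult.assoc[symmetric] sinv)

lemma zpow_mem:
  assumes "rsubmodule (coeff_ring a b c d d') M"
    and "zpow s s' t \<in> M" "zpow s s' (t + 1) \<in> M" "zpow s s' (t + 2) \<in> M" "zpow s s' (t + 3) \<in> M"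
  shows "zpow s s' m \<in> M"
  by (rule recurrence4_closed[where f = "zpow s s'", OF _ _ _ _ _ _ _ _ _ dinv(2)])
     (use assms zpow_quartic_recurrence[OF sinv(2) central quart] in \<open>auto intro: coeff_ring.intros\<close>)

lemma zpow_mem_subalg: "zpow s s' m \<in> subalg (coeff_ring a b c d d') s"
proof -
  have sub: "rsubmodule (coeff_ring a b c d d') (subalg (coeff_ring a b c d d') s)"
    unfolding subalg_def by (rule rsubmodule_rspan) (rule coeff_ring.mult)
  have pow: "s ^ n \<in> subalg (coeff_ring a b c d d') s" for n
    unfolding subalg_def by (blast intro: rspan_base coeff_ring.one)
  show ?thesis
    by (rule zpow_mem[where t = 0, OF sub])
       (use pow[of 0] pow[of 1] pow[of 2] pow[of 3] in \<open>simp_all add: zpow_def\<close>)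
qed

lemma zpow_mem_of_small_powers:
  assumes "rsubmodule (coeff_ring a b c d d') M" "s' ^ 2 \<in> M" "s' \<in> M" "1 \<in> M" "s \<in> M"
  shows "zpow s s' m \<in> M"
  by (rule zpow_mem[where t = "-2"]) (use assms in \<open>simp_all add: zpow_def\<close>)

lemma small_powers_mem_subalg:
  "1 \<in> subalg (coeff_ring a b c d d') s" "s \<in> subalg (coeff_ring a b c d d') s"
  "s' \<in> subalg (coeff_ring a b c d d') s"
  "s ^ 2 \<in> subalg (coeff_ring a b c d d') s" "s' ^ 2 \<in> subalg (coeff_ring a b c d d') s"
  using zpow_mem_subalg[of 0] zpow_mem_subalg[of 1] zpow_mem_subalg[of "-1"]
    zpow_mem_subalg[of 2] zpow_mem_subalg[of "-2"]
  by (simp_all add: zpow_def)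

end

locale braid_quartic =
  q1: quartic_unit a b c d d' s1 s1' + q2: quartic_unit a b c d d' s2 s2'
  for a b c d d' s1 s1' s2 s2' :: "'a::ring_1" +
  assumes braid: "s1 * s2 * s1 = s2 * s1 * s2"
begin

abbreviation "R \<equiv> coeff_ring a b c d d'"
abbreviation "u1 \<equiv> subalg R s1"
abbreviation "u2 \<equiv> subalg R s2"
abbreviation "U' \<equiv> Uprime R s1 s2 s1' s2'"
abbreviation "U \<equiv> Ufull R s1 s2 s1' s2'"

lemma rsubmodule_Uprime: "rsubmodule R U'"
  unfolding Uprime_def Let_def
  by (intro rsubmodule_msum rsubmodule_mprod coeff_ring.mult)

lemma rsubmodule_Ufull: "rsubmodule R U"
  unfolding Ufull_def Let_def
  by (intro rsubmodule_msum rsubmodule_Uprime rsubmodule_mprod coeff_ring.mult)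

lemma Uprime_u1_u2_u1: "x \<in> u1 \<Longrightarrow> y \<in> u2 \<Longrightarrow> z \<in> u1 \<Longrightarrow> x * y * z \<in> U'"
  unfolding Uprime_def Let_def
  by (intro msum_memI1 mprod_zero mprod_mem3 coeff_ring.one)

lemma Uprime_u1_s2_s1inv_s2_u1: "x \<in> u1 \<Longrightarrow> z \<in> u1 \<Longrightarrow> x * (s2 * s1' * s2) * z \<in> U'"
  unfolding Uprime_def Let_def
  by (intro msum_memI1 msum_memI2 mprod_zero mprod_mem3 coeff_ring.one singletonI)

lemma Uprime_u1_s2inv_s1_s2inv_u1: "x \<in> u1 \<Longrightarrow> z \<in> u1 \<Longrightarrow> x * (s2' * s1 * s2') * z \<in> U'"
  unfolding Uprime_def Let_def
  by (intro msum_memI1 msum_memI2 mprod_zero mprod_mem3 coeff_ring.one singletonI)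

lemma Uprime_u1_s2inv_s1invsq_s2inv: "x \<in> u1 \<Longrightarrow> x * (s2' * s1' ^ 2 * s2') \<in> U'"
  unfolding Uprime_def Let_def
  by (intro msum_memI2 mprod_zero mprod_mem2 coeff_ring.one singletonI)

lemma Uprime_subset_Ufull: "U' \<subseteq> U"
  unfolding Ufull_def Let_def by (blast intro: msum_memI1 mprod_zero)

lemma Ufull_u1_s2_s1invsq_s2_u1: "x \<in> u1 \<Longrightarrow> z \<in> u1 \<Longrightarrow> x * (s2 * s1' ^ 2 * s2) * z \<in> U"
  unfolding Ufull_def Let_def
  by (intro msum_memI1 msum_memI2 mprod_zero mprod_mem3 coeff_ring.one singletonI
      rsubmodule_zero[OF rsubmodule_Uprime])

lemmas unit_simps = mult.assoc q1.sinv q2.sinv q1.sinv_cancel q2.sinv_cancel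
lemmas u1 = q1.small_powers_mem_subalg and u2 = q2.small_powers_mem_subalg

lemma s2_s1_s2inv: "s2 * s1 * s2' = s1' * s2 * s1"
proof -
  have "s2 * s1 * s2' = s1' * (s1 * s2 * s1) * s2'" by (simp add: unit_simps)
  also have "\<dots> = s1' * (s2 * s1 * s2) * s2'" by (simp only: braid)
  also have "\<dots> = s1' * s2 * s1" by (simp add: unit_simps)
  finally show ?thesis .
qed

lemma s2_s1inv_s2inv: "s2 * s1' * s2' = s1' * s2' * s1"
proof -
  have "s1' * s2' * s1 = (s2 * s1' * s2') * (s2 * s1 * s2') * (s1' * s2' * s1)"
    by (simp add: unit_simps)
  also have "\<dots> = (s2 * s1' * s2') * (s1' * s2 * s1) * (s1' * s2' * s1)"
    by (simp only: s2_s1_s2inv)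
  also have "\<dots> = s2 * s1' * s2'" by (simp add: unit_simps)
  finally show ?thesis by simp
qed

lemma braid_inverse: "s2' * s1' * s2' = s1' * s2' * s1'"
proof -
  have "s1' * s2' * s1' = (s2' * s1' * s2') * (s2 * s1 * s2) * (s1' * s2' * s1')"
    by (simp add: unit_simps)
  also have "\<dots> = (s2' * s1' * s2') * (s1 * s2 * s1) * (s1' * s2' * s1')"
    by (simp only: braid)
  also have "\<dots> = s2' * s1' * s2'" by (simp add: unit_simps)
  finally show ?thesis by simp
qed

lemma s2_zpow_s2inv: "s2 * zpow s1 s1' m * s2' = s1' * zpow s2 s2' m * s1"
proof -
  have "s2 * zpow s1 s1' m * s2' = zpow (s2 * s1 * s2') (s2 * s1' * s2') m"
    by (rule zpow_conj[OF q2.sinv])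
  also have "\<dots> = zpow (s1' * s2 * s1) (s1' * s2' * s1) m"
    by (simp only: s2_s1_s2inv s2_s1inv_s2inv)
  also have "\<dots> = s1' * zpow s2 s2' m * s1"
    by (rule zpow_conj[OF q1.sinv(2,1), symmetric])
  finally show ?thesis .
qed

lemma s2_zpow_s2_mem_Ufull: "s2 * zpow s1 s1' m * s2 \<in> U"
proof -
  have M: "rsubmodule R {x. s2 * x * s2 \<in> U}"
    by (rule rsubmodule_sandwich[OF rsubmodule_Ufull q1.coeff_commute])
  have "zpow s1 s1' m \<in> {x. s2 * x * s2 \<in> U}"
  proof (rule q1.zpow_mem_of_small_powers[OF M]; simp)
    show "s2 * s1' ^ 2 * s2 \<in> U"
      using Ufull_u1_s2_s1invsq_s2_u1[OF u1(1) u1(1)] by simp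
    show "s2 * s1' * s2 \<in> U"
      using Uprime_u1_s2_s1inv_s2_u1[OF u1(1) u1(1)] Uprime_subset_Ufull by auto
    show "s2 * s2 \<in> U"
      using Uprime_u1_u2_u1[OF u1(1) u2(4) u1(1)] Uprime_subset_Ufull
      by (auto simp: power2_eq_square)
    show "s2 * s1 * s2 \<in> U"
      using Uprime_u1_u2_u1[OF u1(2) u2(2) u1(2)] Uprime_subset_Ufull braid by auto
  qed
  then show ?thesis by simp
qed

lemma s2inv_zpow_s2inv_mem_Uprime: "s2' * zpow s1 s1' m * s2' \<in> U'"
proof -
  have M: "rsubmodule R {x. s2' * x * s2' \<in> U'}"
    by (rule rsubmodule_sandwich[OF rsubmodule_Uprime q1.coeff_commute])
  have "zpow s1 s1' m \<in> {x. s2' * x * s2' \<in> U'}"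
  proof (rule q1.zpow_mem_of_small_powers[OF M]; simp)
    show "s2' * s1' ^ 2 * s2' \<in> U'"
      using Uprime_u1_s2inv_s1invsq_s2inv[OF u1(1)] by simp
    show "s2' * s1' * s2' \<in> U'"
      using Uprime_u1_u2_u1[OF u1(3) u2(3) u1(3)] braid_inverse by simp
    show "s2' * s2' \<in> U'"
      using Uprime_u1_u2_u1[OF u1(1) u2(5) u1(1)] by (simp add: power2_eq_square)
    show "s2' * s1 * s2' \<in> U'"
      using Uprime_u1_s2inv_s1_s2inv_u1[OF u1(1) u1(1)] by simp
  qed
  then show ?thesis by simp
qed

lemma s2sq_zpow_s2inv_mem_Uprime: "s2 ^ 2 * zpow s1 s1' m * s2' \<in> U'"
proof -
  have conj: "s2 ^ 2 * zpow s1 s1' m * s2' = s2 * s1' * zpow s2 s2' m * s1"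
    using s2_zpow_s2inv[of m] by (simp add: power2_eq_square mult.assoc)
  have M: "rsubmodule R {y. s2 * s1' * y * s1 \<in> U'}"
    by (rule rsubmodule_sandwich[OF rsubmodule_Uprime q1.coeff_commute])
  have "zpow s2 s2' m \<in> {y. s2 * s1' * y * s1 \<in> U'}"
  proof (rule q2.zpow_mem_of_small_powers[OF M]; simp)
    have "s2 * s1' * s2' ^ 2 * s1 = (s2 * s1' * s2') * s2' * s1"
      by (simp add: power2_eq_square mult.assoc)
    also have "\<dots> = s1' * (s2' * s1 * s2') * s1"
      unfolding s2_s1inv_s2inv by (simp only: mult.assoc)
    finally show "s2 * s1' * s2' ^ 2 * s1 \<in> U'"
      using Uprime_u1_s2inv_s1_s2inv_u1[OF u1(3) u1(2)] by simp
    have "s2 * s1' * s2' * s1 = s1' * s2' * s1 ^ 2"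
      unfolding s2_s1inv_s2inv by (simp only: power2_eq_square mult.assoc)
    then show "s2 * s1' * s2' * s1 \<in> U'"
      using Uprime_u1_u2_u1[OF u1(3) u2(3) u1(4)] by simp
    show "s2 * s1' * s1 \<in> U'"
      using Uprime_u1_u2_u1[OF u1(1) u2(2) u1(1)] by (simp add: unit_simps)
    show "s2 * s1' * s2 * s1 \<in> U'"
      using Uprime_u1_s2_s1inv_s2_u1[OF u1(1) u1(2)] by simp
  qed
  then show ?thesis by (simp add: conj)
qed

lemma s2invsq_zpow_s2inv_mem_Uprime: "s2' ^ 2 * zpow s1 s1' m * s2' \<in> U'"
proof -
  \<comment> \<open>Naming w keeps unfolding zpow_def away from the powers of s1.\<close>
  define w where "w = zpow s1 s1' m * s2'"
  have M: "rsubmodule R {y. y * w \<in> U'}"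
    using rsubmodule_sandwich[OF rsubmodule_Uprime q1.coeff_commute, of 1 w] by simp
  have "zpow s2 s2' (-2) \<in> {y. y * w \<in> U'}"
  proof (rule q2.zpow_mem[where t = "-1", OF M]; simp add: zpow_def)
    show "s2' * w \<in> U'"
      using s2inv_zpow_s2inv_mem_Uprime[of m] by (simp add: w_def mult.assoc)
    show "w \<in> U'"
      using Uprime_u1_u2_u1[OF q1.zpow_mem_subalg u2(3) u1(1)] by (simp add: w_def)
    show "s2 * w \<in> U'"
      using Uprime_u1_u2_u1[OF u1(3) q2.zpow_mem_subalg u1(2)] s2_zpow_s2inv[of m]
      by (simp add: w_def mult.assoc)
    show "s2 ^ 2 * w \<in> U'"
      using s2sq_zpow_s2inv_mem_Uprime[of m] by (simp add: w_def mult.assoc)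
  qed
  then show ?thesis by (simp add: zpow_def w_def mult.assoc)
qed

end

theorem lemma3p1:
  fixes a b c d d' s1 s2 s1' s2' :: "'a::ring_1"
  assumes central: "\<And>x. a * x = x * a" "\<And>x. b * x = x * b"
                   "\<And>x. c * x = x * c" "\<And>x. d * x = x * d"
    and dinv: "d * d' = 1" "d' * d = 1"
    and s1inv: "s1 * s1' = 1" "s1' * s1 = 1"
    and s2inv: "s2 * s2' = 1" "s2' * s2 = 1"
    and braid: "s1 * s2 * s1 = s2 * s1 * s2"
    and quart1: "s1 ^ 4 = a * s1 ^ 3 + b * s1 ^ 2 + c * s1 + d"
    and quart2: "s2 ^ 4 = a * s2 ^ 3 + b * s2 ^ 2 + c * s2 + d"
  shows "\<forall>m::int.
           s2 * zpow s1 s1' m * s2 \<in> Ufull (coeff_ring a b c d d') s1 s2 s1' s2'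
         \<and> s2' * zpow s1 s1' m * s2' \<in> Uprime (coeff_ring a b c d d') s1 s2 s1' s2'
         \<and> s2' ^ 2 * zpow s1 s1' m * s2' \<in> Uprime (coeff_ring a b c d d') s1 s2 s1' s2'"
proof -
  interpret braid_quartic a b c d d' s1 s1' s2 s2'
    by unfold_locales (fact assms)+
  show ?thesis
    using s2_zpow_s2_mem_Ufull s2inv_zpow_s2inv_mem_Uprime s2invsq_zpow_s2inv_mem_Uprime
    by blast
qed

end
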